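(* For $t\ge 0$ and $f\in\mathrm{Lip}_{[2]}(\mathbb{R})$ define $\mathbf{P}^0_t f(x)=\mathbb{E}\big[f\big(\max(x-t,\ Z+\log(1-e^{-t}))\big)\big]$, $x\in\mathbb{R}$, where $Z$ has the standard Gumbel distribution $\mu$ (with the convention $\log 0=-\infty$, so $\mathbf{P}^0_0 f=f$). Then $(\mathbf{P}^0_t)_{t\ge0}$ is a semi-group of linear operators on $\mathrm{Lip}_{[2]}(\mathbb{R})$, i.e. $\mathbf{P}^0_0=\mathrm{Id}$ and $\mathbf{P}^0_t\circ\mathbf{P}^0_s=\mathbf{P}^0_{t+s}$ for all $t,s\ge0$; it is ergodic, in the sense that $\lim_{t\to\infty}\mathbf{P}^0_t f(x)=\int_{\mathbb{R}} f\,d\mu$ for every $x\in\mathbb{R}$ and $f\in\mathrm{Lip}_{[2]}(\mathbb{R})$; and $\mu$ is an invariant (stationary) measure: $\mathbb{E}[\mathbf{P}^0_t f(Z)]=\mathbb{E}[f(Z)]$ for all $t\ge0$.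
   Context: The standard Gumbel distribution $\mu=\mathcal{G}(0,1)$ has density $x\mapsto e^{-(x+e^{-x})}$ on $\mathbb{R}$. $\mathrm{Lip}_{[2]}(\mathbb{R})$ is the set of Lipschitz functions $f:\mathbb{R}\to\mathbb{R}$ whose derivative $f'$ admits a Lipschitz representative (functions need not be bounded). *)

theory Defs
  imports "HOL-Analysis.Analysis" "HOL-Probability.Probability"
begin

definition gumbel :: "real measure" where
  "gumbel = density lborel (\<lambda>x. ennreal (exp (-(x + exp (-x)))))"

definition Lip2 :: "(real \<Rightarrow> real) set" where
  "Lip2 = {f. (\<exists>L. L-lipschitz_on UNIV f) \<and>
              (\<exists>g. (\<exists>K. K-lipschitz_on UNIV g) \<and>
                   (AE x in lborel. (f has_real_derivative g x) (at x)))}"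

text \<open>The semigroup P^0_t; for t = 0 the convention log 0 = -infinity gives P^0_0 f = f.\<close>
definition P0 :: "real \<Rightarrow> (real \<Rightarrow> real) \<Rightarrow> real \<Rightarrow> real" where
  "P0 t f x = (if t = 0 then f x
     else (\<integral>z. f (max (x - t) (z + ln (1 - exp (-t)))) \<partial>gumbel))"

end

theory Submission
  imports Defs "HOL-Real_Asymp.Real_Asymp"
begin

text \<open>The Gumbel law is max-stable: its distribution function \<open>exp (- exp (- y))\<close> turns the
  maximum of independent variables into a sum in the exponent, so for independent standard Gumbel
  \<open>Z\<^sub>1, Z\<^sub>2\<close> the variable \<open>max (Z\<^sub>1 + a) (Z\<^sub>2 + b)\<close> has the law of \<open>Z + ln (exp a + exp b)\<close>.
  With \<open>c t = ln (1 - exp (- t))\<close>, applying \<open>P0 t\<close> after \<open>P0 s\<close> compares \<open>x - t - s\<close> with two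
  independent shifts \<open>c t - s\<close> and \<open>c s\<close>, and \<open>exp (c t - s) + exp (c s) = exp (c (t + s))\<close>; starting
  from \<open>x = Z\<close> the shifts are \<open>- t\<close> and \<open>c t\<close>, whose exponentials add up to 1, which is invariance.
  Ergodicity is dominated convergence, since \<open>c t \<longrightarrow> 0\<close>. Finally \<open>P0 t\<close> preserves Lipschitz
  constants and differentiates to \<open>f' (x - t) * P(Z + c t < x - t)\<close>, a product of bounded
  Lipschitz functions.\<close>

section \<open>Lipschitz functions, derivatives and integrals\<close>

lemma lipschitz_on_UNIV_borel_measurable [measurable_dest]:
  "L-lipschitz_on UNIV (h :: real \<Rightarrow> real) \<Longrightarrow> h \<in> borel_measurable borel"
  by (intro borel_measurable_continuous_onI lipschitz_on_continuous_on)

lemma lipschitz_on_UNIV_abs_le: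
  assumes "L-lipschitz_on UNIV (h :: real \<Rightarrow> real)"
  shows "\<bar>h z\<bar> \<le> \<bar>h 0\<bar> + L * \<bar>z\<bar>"
  using lipschitz_onD[OF assms, of z 0] by (auto simp: dist_real_def)

lemma lipschitz_on_compose_nonexpansive:
  assumes h: "L-lipschitz_on UNIV (h :: real \<Rightarrow> real)"
    and \<phi>: "\<And>x y. \<bar>\<phi> x - \<phi> y\<bar> \<le> \<bar>x - y\<bar>"
  shows "L-lipschitz_on UNIV (\<lambda>z. h (\<phi> z))"
proof (rule lipschitz_onI)
  show "0 \<le> L"
    using h by (rule lipschitz_on_nonneg)
  fix x y :: real
  have "dist (h (\<phi> x)) (h (\<phi> y)) \<le> L * dist (\<phi> x) (\<phi> y)"
    using lipschitz_onD[OF h] by simp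
  also have "\<dots> \<le> L * dist x y"
    using \<phi>[of x y] \<open>0 \<le> L\<close> by (simp add: dist_real_def mult_left_mono)
  finally show "dist (h (\<phi> x)) (h (\<phi> y)) \<le> L * dist x y" .
qed

lemma lipschitz_on_mult_bounded:
  fixes f g :: "'a::metric_space \<Rightarrow> real"
  assumes f: "A-lipschitz_on U f" and g: "B-lipschitz_on U g"
    and f_bound: "\<And>x. x \<in> U \<Longrightarrow> \<bar>f x\<bar> \<le> M" and g_bound: "\<And>x. x \<in> U \<Longrightarrow> \<bar>g x\<bar> \<le> N"
    and "0 \<le> M" "0 \<le> N"
  shows "(M * B + N * A)-lipschitz_on U (\<lambda>x. f x * g x)"
proof (rule lipschitz_onI)
  show "0 \<le> M * B + N * A"
    using \<open>0 \<le> M\<close> \<open>0 \<le> N\<close> lipschitz_on_nonneg[OF f] lipschitz_on_nonneg[OF g] by simp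
  fix x y
  assume "x \<in> U" "y \<in> U"
  have "\<bar>f x * g x - f y * g y\<bar> = \<bar>f x * (g x - g y) + g y * (f x - f y)\<bar>"
    by (simp add: algebra_simps)
  also have "\<dots> \<le> \<bar>f x\<bar> * \<bar>g x - g y\<bar> + \<bar>g y\<bar> * \<bar>f x - f y\<bar>"
    by (simp add: abs_mult[symmetric] abs_triangle_ineq)
  also have "\<dots> \<le> M * (B * dist x y) + N * (A * dist x y)"
    using lipschitz_onD[OF f \<open>x \<in> U\<close> \<open>y \<in> U\<close>] lipschitz_onD[OF g \<open>x \<in> U\<close> \<open>y \<in> U\<close>]
      f_bound[OF \<open>x \<in> U\<close>] g_bound[OF \<open>y \<in> U\<close>]
    by (intro add_mono mult_mono) (auto simp: dist_real_def)
  finally show "dist (f x * g x) (f y * g y) \<le> (M * B + N * A) * dist x y"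
    by (simp add: dist_real_def algebra_simps)
qed

lemma lipschitz_on_has_real_derivative_abs_le:
  assumes f: "L-lipschitz_on UNIV f" and D: "(f has_real_derivative D) (at y)"
  shows "\<bar>D\<bar> \<le> L"
proof (rule tendsto_upperbound)
  show "((\<lambda>h. \<bar>(f (y + h) - f y) / h\<bar>) \<longlongrightarrow> \<bar>D\<bar>) (at 0)"
    using D by (intro tendsto_rabs) (simp add: DERIV_def)
  show "\<forall>\<^sub>F h in at 0. \<bar>(f (y + h) - f y) / h\<bar> \<le> L"
  proof (rule eventually_at_filter[THEN iffD2, OF always_eventually], intro allI impI)
    fix h :: real
    assume "h \<noteq> 0"
    have "\<bar>f (y + h) - f y\<bar> \<le> L * \<bar>h\<bar>"
      using lipschitz_onD[OF f, of "y + h" y] by (simp add: dist_real_def)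
    with \<open>h \<noteq> 0\<close> show "\<bar>(f (y + h) - f y) / h\<bar> \<le> L"
      by (simp add: abs_divide divide_le_eq)
  qed
qed simp

text \<open>An open set on which the a.e. derivative would exceed \<open>L\<close> is null, hence empty.\<close>

lemma lipschitz_on_AE_derivative_abs_le:
  assumes f: "L-lipschitz_on UNIV f" and g: "continuous_on UNIV g"
    and ae: "AE x in lborel. (f has_real_derivative g x) (at x)"
  shows "\<bar>g x\<bar> \<le> L"
proof (rule ccontr)
  assume "\<not> \<bar>g x\<bar> \<le> L"
  moreover have "open {y. L < \<bar>g y\<bar>}"
    by (intro open_Collect_less continuous_intros g)
  ultimately obtain e where "0 < e" and e: "ball x e \<subseteq> {y. L < \<bar>g y\<bar>}"
    using open_contains_ball by (metis mem_Collect_eq not_le)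
  from ae have "AE y in lborel. y \<notin> ball x e"
    by (rule eventually_mono) (use e lipschitz_on_has_real_derivative_abs_le[OF f] in fastforce)
  then have "ball x e \<in> null_sets lborel"
    by (subst AE_iff_null_sets) auto
  with \<open>0 < e\<close> show False
    by (simp add: ball_eq_greaterThanLessThan null_sets_def)
qed

lemma AE_lborel_translate:
  assumes "AE x in lborel. P x"
  shows "AE x in lborel. P (x - a)"
proof -
  from assms obtain N where N: "{x. \<not> P x} \<subseteq> N" "N \<in> null_sets lborel"
    by (auto simp: eventually_ae_filter)
  show ?thesis
    by (rule AE_I'[OF null_sets_translation[OF N(2)]]) (use N(1) in auto)
qed

lemma difference_quotient_max_tendsto:
  fixes f :: "real \<Rightarrow> real"
  assumes D: "(f has_real_derivative D) (at y)" and "w \<noteq> y"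
  shows "((\<lambda>h. (f (max (y + h) w) - f (max y w)) / h) \<longlongrightarrow> (if w < y then D else 0)) (at 0)"
proof -
  have near: "\<forall>\<^sub>F h in at 0. \<bar>h\<bar> < \<bar>y - w\<bar>"
    using \<open>w \<noteq> y\<close> by (auto simp: eventually_at intro!: exI[of _ "\<bar>y - w\<bar>"])
  show ?thesis
  proof (cases "w < y")
    case True
    have "((\<lambda>h. (f (y + h) - f y) / h) \<longlongrightarrow> D) (at 0)"
      using D by (simp add: DERIV_def)
    moreover have "\<forall>\<^sub>F h in at 0. (f (y + h) - f y) / h = (f (max (y + h) w) - f (max y w)) / h"
      using near by (rule eventually_mono) (use True in \<open>auto simp: max_def\<close>)
    ultimately show ?thesis
      using True by (simp add: Lim_transform_eventually)
  next
    case False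
    have "\<forall>\<^sub>F h in at 0. 0 = (f (max (y + h) w) - f (max y w)) / h"
      using near by (rule eventually_mono) (use False \<open>w \<noteq> y\<close> in \<open>auto simp: max_def\<close>)
    with False show ?thesis
      by (simp add: Lim_transform_eventually[OF tendsto_const])
  qed
qed

lemma abs_difference_quotient_max_le:
  assumes f: "L-lipschitz_on UNIV f"
  shows "\<bar>(f (max (y + h) w) - f (max y w)) / h\<bar> \<le> L"
proof -
  have "\<bar>f (max (y + h) w) - f (max y w)\<bar> \<le> L * \<bar>max (y + h) w - max y w\<bar>"
    using lipschitz_onD[OF f] by (simp add: dist_real_def)
  also have "\<dots> \<le> L * \<bar>h\<bar>"
    using lipschitz_on_nonneg[OF f] by (intro mult_left_mono) (auto simp: max_def)
  finally show ?thesis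
    using lipschitz_on_nonneg[OF f] by (cases "h = 0") (auto simp: abs_divide divide_le_eq)
qed

lemma nn_integral_FTC_UNIV:
  fixes f F :: "real \<Rightarrow> real"
  assumes f_borel: "f \<in> borel_measurable borel"
    and f: "\<And>x. (F has_real_derivative f x) (at x)" and nonneg: "\<And>x. 0 \<le> f x"
    and bot: "(F \<longlongrightarrow> 0) at_bot" and top: "(F \<longlongrightarrow> T) at_top"
  shows "(\<integral>\<^sup>+x. ennreal (f x) \<partial>lborel) = T"
proof -
  let ?g = "\<lambda>(n::nat) x. ennreal (f x) * indicator {- real n ..} x"
  have "(\<lambda>n. integral\<^sup>N lborel (?g n)) \<longlonglongrightarrow> (\<integral>\<^sup>+x. ennreal (f x) \<partial>lborel)"
  proof (rule nn_integral_LIMSEQ)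
    show "incseq ?g"
      by (auto simp: incseq_def le_fun_def split: split_indicator)
    show "?g n \<in> borel_measurable lborel" for n
      using f_borel by measurable
    show "(\<lambda>n. ?g n x) \<longlonglongrightarrow> ennreal (f x)" for x
    proof (rule tendsto_eventually)
      obtain n :: nat where "- x \<le> real n"
        using real_arch_simple by blast
      then show "\<forall>\<^sub>F n in sequentially. ?g n x = ennreal (f x)"
        unfolding eventually_sequentially by (intro exI[of _ n]) (auto split: split_indicator)
    qed
  qed
  moreover have "integral\<^sup>N lborel (?g n) = ennreal (T - F (- real n))" for n
    by (rule nn_integral_FTC_atLeast[OF f_borel f nonneg top])
  moreover have "(\<lambda>n. ennreal (T - F (- real n))) \<longlonglongrightarrow> ennreal T"
  proof -
    have "filterlim (\<lambda>n::nat. - real n) at_bot sequentially"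
      by (rule filterlim_compose[OF filterlim_uminus_at_bot_at_top filterlim_real_sequentially])
    then have "(\<lambda>n. F (- real n)) \<longlonglongrightarrow> 0"
      by (rule filterlim_compose[OF bot])
    then show ?thesis
      by (intro tendsto_ennrealI) (auto intro!: tendsto_eq_intros)
  qed
  ultimately show ?thesis
    using LIMSEQ_unique by fastforce
qed

lemma integrable_times_exp_atLeast_0:
  "integrable lborel (\<lambda>x::real. x * exp (- x) * indicator {0..} x)"
proof (rule integrableI_nn_integral_finite[where x=1])
  have "(\<integral>\<^sup>+x. ennreal (x * exp (- x) * indicator {0..} x) \<partial>lborel)
      = (\<integral>\<^sup>+x. ennreal (x ^ 1 * exp (- x)) * indicator {0..} x \<partial>lborel)"
    by (intro nn_integral_cong) (auto split: split_indicator)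
  also have "\<dots> = ennreal 1"
    using nn_intergal_power_times_exp_Ici[of 1] by simp
  finally show "(\<integral>\<^sup>+x. ennreal (x * exp (- x) * indicator {0..} x) \<partial>lborel) = ennreal 1" .
qed (auto split: split_indicator)

lemma integral_dominated_convergence_at:
  fixes s :: "'c::first_countable_topology \<Rightarrow> 'a \<Rightarrow> 'b::{banach, second_countable_topology}"
  assumes "f \<in> borel_measurable M" "\<And>h. s h \<in> borel_measurable M" "integrable M w"
    and lim: "AE x in M. ((\<lambda>h. s h x) \<longlongrightarrow> f x) (at a)"
    and "\<And>h. AE x in M. norm (s h x) \<le> w x"
  shows "((\<lambda>h. integral\<^sup>L M (s h)) \<longlongrightarrow> integral\<^sup>L M f) (at a)"
  unfolding tendsto_at_iff_sequentially comp_def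
proof (intro allI impI)
  fix X :: "nat \<Rightarrow> 'c"
  assume "\<forall>i. X i \<in> UNIV - {a}" "X \<longlonglongrightarrow> a"
  then have X: "filterlim X (at a) sequentially"
    by (intro filterlim_atI) auto
  show "(\<lambda>i. integral\<^sup>L M (s (X i))) \<longlonglongrightarrow> integral\<^sup>L M f"
  proof (rule integral_dominated_convergence[where w=w])
    show "AE x in M. (\<lambda>i. s (X i) x) \<longlonglongrightarrow> f x"
      using lim by (rule eventually_mono) (rule filterlim_compose[OF _ X])
  qed (use assms in auto)
qed

section \<open>The standard Gumbel law\<close>

abbreviation gumbel_density :: "real \<Rightarrow> real" where
  "gumbel_density x \<equiv> exp (- (x + exp (- x)))"

abbreviation gumbel_cdf :: "real \<Rightarrow> real" where
  "gumbel_cdf y \<equiv> exp (- exp (- y))"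

lemma sets_gumbel [simp, measurable_cong]: "sets gumbel = sets borel"
  by (simp add: gumbel_def)

lemma space_gumbel [simp]: "space gumbel = UNIV"
  by (simp add: gumbel_def)

lemma measurable_gumbel [simp]: "measurable gumbel M = measurable borel M"
  by (rule measurable_cong_sets) auto

lemma gumbel_density_eq: "gumbel_density x = exp (- x) * gumbel_cdf x"
  by (simp flip: exp_add)

lemma gumbel_cdf_has_real_derivative: "(gumbel_cdf has_real_derivative gumbel_density x) (at x)"
  unfolding gumbel_density_eq by (auto intro!: derivative_eq_intros)

lemma gumbel_density_le_1: "gumbel_density x \<le> 1"
proof -
  have "exp (- x) \<le> exp (exp (- x))"
    using exp_ge_add_one_self[of "exp (- x)"] by linarith
  then show ?thesis
    by (simp add: gumbel_density_eq exp_minus[of "exp (- x)"] field_simps)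
qed

lemma lipschitz_gumbel_cdf: "1-lipschitz_on UNIV gumbel_cdf"
proof (rule bounded_derivative_imp_lipschitz)
  show "(gumbel_cdf has_derivative (*) (gumbel_density x)) (at x within UNIV)" for x
    using gumbel_cdf_has_real_derivative by (simp add: has_field_derivative_def)
  show "onorm ((*) (gumbel_density x)) \<le> 1" for x
    by (rule onorm_le)
      (use mult_right_mono[OF gumbel_density_le_1[of x] abs_ge_zero] in \<open>simp add: abs_mult\<close>)
qed auto

lemma emeasure_gumbel_atLeast: "emeasure gumbel {y..} = ennreal (1 - gumbel_cdf y)"
proof -
  have "emeasure gumbel {y..} = (\<integral>\<^sup>+x. ennreal (gumbel_density x) * indicator {y..} x \<partial>lborel)"
    unfolding gumbel_def by (subst emeasure_density) auto
  also have "\<dots> = ennreal (1 - gumbel_cdf y)"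
    by (rule nn_integral_FTC_atLeast) (use gumbel_cdf_has_real_derivative in \<open>auto, real_asymp\<close>)
  finally show ?thesis .
qed

lemma prob_space_gumbel: "prob_space gumbel"
proof (rule prob_spaceI)
  have "emeasure gumbel UNIV = (\<integral>\<^sup>+x. ennreal (gumbel_density x) \<partial>lborel)"
    unfolding gumbel_def by (subst emeasure_density) auto
  also have "\<dots> = ennreal 1"
    by (rule nn_integral_FTC_UNIV) (use gumbel_cdf_has_real_derivative in \<open>auto, real_asymp+\<close>)
  finally show "emeasure gumbel (space gumbel) = 1"
    by simp
qed

interpretation G: prob_space gumbel
  by (rule prob_space_gumbel)

lemma emeasure_gumbel_singleton: "emeasure gumbel {y} = 0"
proof -
  have "AE x in lborel. x \<notin> {y}"
    by (intro AE_not_in countable_imp_null_set_lborel) auto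
  then have "{y} \<in> null_sets gumbel"
    unfolding gumbel_def by (subst null_sets_density_iff) (auto elim: eventually_mono)
  then show ?thesis
    by auto
qed

lemma measure_gumbel_lessThan: "measure gumbel {..<y} = gumbel_cdf y"
proof -
  have "{..<y} = UNIV - {y..}"
    by auto
  then have "measure gumbel {..<y} = 1 - measure gumbel {y..}"
    using G.prob_compl[of "{y..}"] by simp
  also have "measure gumbel {y..} = 1 - gumbel_cdf y"
    unfolding measure_def emeasure_gumbel_atLeast by simp
  finally show ?thesis
    by simp
qed

lemma measure_gumbel_atMost: "measure gumbel {..y} = gumbel_cdf y"
proof -
  have "measure gumbel {..y} = measure gumbel {..<y} + measure gumbel {y}"
    using G.finite_measure_Union[of "{..<y}" "{y}"] by (simp add: ivl_disj_un_singleton(2)[symmetric])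
  then show ?thesis
    using emeasure_gumbel_singleton measure_gumbel_lessThan by (simp add: measure_def)
qed

lemma integrable_gumbel_density_times_exp:
  "integrable lborel (\<lambda>x. gumbel_density x * exp (- x))"
proof (rule integrableI_nn_integral_finite[where x=1])
  show "(\<integral>\<^sup>+x. ennreal (gumbel_density x * exp (- x)) \<partial>lborel) = ennreal 1"
  proof (rule nn_integral_FTC_UNIV[where F="\<lambda>x. (1 + exp (- x)) * gumbel_cdf x"])
    show "((\<lambda>x. (1 + exp (- x)) * gumbel_cdf x) has_real_derivative gumbel_density x * exp (- x)) (at x)" for x
      unfolding gumbel_density_eq by (auto intro!: derivative_eq_intros simp: algebra_simps)
  qed (auto, real_asymp+)
qed auto

lemma gumbel_density_times_abs_le:
  "gumbel_density x * \<bar>x\<bar> \<le> gumbel_density x * exp (- x) + x * exp (- x) * indicator {0..} x"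
proof (cases "x < 0")
  case True
  have "- x \<le> exp (- x)"
    using exp_ge_add_one_self[of "- x"] by linarith
  then have "gumbel_density x * \<bar>x\<bar> \<le> gumbel_density x * exp (- x)"
    using True by (intro mult_left_mono) auto
  with True show ?thesis
    by simp
next
  case False
  have "gumbel_density x \<le> exp (- x)"
    unfolding gumbel_density_eq by (simp add: mult_left_le)
  then have "gumbel_density x * \<bar>x\<bar> \<le> x * exp (- x)"
    using False by (simp add: mult.commute mult_left_mono)
  with False show ?thesis
    by (simp add: add_increasing)
qed

lemma integrable_gumbel_abs: "integrable gumbel (\<lambda>z. \<bar>z\<bar>)"
proof -
  have "integrable lborel (\<lambda>x. gumbel_density x * \<bar>x\<bar>)"
  proof (rule Bochner_Integration.integrable_bound)
    show "integrable lborel (\<lambda>x. gumbel_density x * exp (- x) + x * exp (- x) * indicator {0..} x)"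
      by (intro Bochner_Integration.integrable_add integrable_gumbel_density_times_exp
          integrable_times_exp_atLeast_0)
    show "AE x in lborel. norm (gumbel_density x * \<bar>x\<bar>)
        \<le> norm (gumbel_density x * exp (- x) + x * exp (- x) * indicator {0..} x)"
      using gumbel_density_times_abs_le by (auto intro: order_trans[OF _ abs_ge_self])
  qed auto
  then show ?thesis
    unfolding gumbel_def by (subst integrable_density) auto
qed

lemma integrable_gumbel_lipschitz:
  assumes h: "L-lipschitz_on UNIV (h :: real \<Rightarrow> real)"
  shows "integrable gumbel h"
proof (rule Bochner_Integration.integrable_bound)
  show "integrable gumbel (\<lambda>z. \<bar>h 0\<bar> + L * \<bar>z\<bar>)"
    by (intro Bochner_Integration.integrable_add integrable_mult_right integrable_gumbel_abs) auto
  show "AE z in gumbel. norm (h z) \<le> norm (\<bar>h 0\<bar> + L * \<bar>z\<bar>)"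
    using lipschitz_on_UNIV_abs_le[OF h] lipschitz_on_nonneg[OF h] by auto
qed (use h in simp)

lemma integrable_gumbel_lipschitz_max:
  assumes "L-lipschitz_on UNIV (h :: real \<Rightarrow> real)"
  shows "integrable gumbel (\<lambda>z. h (max x (z + c)))"
  by (rule integrable_gumbel_lipschitz[OF lipschitz_on_compose_nonexpansive[OF assms]])
    (auto simp: max_def)

section \<open>Max-stability\<close>

interpretation GG: pair_prob_space gumbel gumbel
  by unfold_locales

lemma gumbel_cdf_mult: "gumbel_cdf (y - a) * gumbel_cdf (y - b) = gumbel_cdf (y - ln (exp a + exp b))"
proof -
  have "exp (- (y - ln (exp a + exp b))) = exp (- (y - a)) + exp (- (y - b))"
    by (simp add: exp_diff add_pos_pos add_divide_distrib)
  then show ?thesis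
    by (simp flip: exp_add)
qed

lemma distr_max_gumbel_pair:
  "distr (gumbel \<Otimes>\<^sub>M gumbel) borel (\<lambda>(z1, z2). max (z1 + a) (z2 + b))
     = distr gumbel borel (\<lambda>z. z + ln (exp a + exp b))"
proof (rule cdf_unique)
  let ?k = "ln (exp a + exp b)"
  show "real_distribution (distr (gumbel \<Otimes>\<^sub>M gumbel) borel (\<lambda>(z1, z2). max (z1 + a) (z2 + b)))"
    by (intro GG.real_distribution_distr) measurable
  show "real_distribution (distr gumbel borel (\<lambda>z. z + ?k))"
    by (intro G.real_distribution_distr) simp
  show "cdf (distr (gumbel \<Otimes>\<^sub>M gumbel) borel (\<lambda>(z1, z2). max (z1 + a) (z2 + b)))
      = cdf (distr gumbel borel (\<lambda>z. z + ?k))"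
  proof
    fix y :: real
    have "cdf (distr (gumbel \<Otimes>\<^sub>M gumbel) borel (\<lambda>(z1, z2). max (z1 + a) (z2 + b))) y
        = measure (gumbel \<Otimes>\<^sub>M gumbel) ({..y - a} \<times> {..y - b})"
      unfolding cdf_def
      by (subst measure_distr) (auto intro!: arg_cong2[where f=measure] simp: space_pair_measure)
    also have "\<dots> = measure gumbel {..y - a} * measure gumbel {..y - b}"
      by (simp add: measure_def G.emeasure_pair_measure_Times enn2real_mult)
    also have "\<dots> = gumbel_cdf (y - a) * gumbel_cdf (y - b)"
      by (simp only: measure_gumbel_atMost)
    also have "\<dots> = measure gumbel {..y - ?k}"
      unfolding measure_gumbel_atMost by (rule gumbel_cdf_mult)
    also have "\<dots> = cdf (distr gumbel borel (\<lambda>z. z + ?k)) y"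
      unfolding cdf_def by (subst measure_distr) (auto intro!: arg_cong2[where f=measure])
    finally show "cdf (distr (gumbel \<Otimes>\<^sub>M gumbel) borel (\<lambda>(z1, z2). max (z1 + a) (z2 + b))) y
      = cdf (distr gumbel borel (\<lambda>z. z + ?k)) y" .
  qed
qed

lemma integral_max_gumbel_pair:
  assumes h: "L-lipschitz_on UNIV (h :: real \<Rightarrow> real)"
  shows "(\<integral>z1. (\<integral>z2. h (max (z1 + a) (z2 + b)) \<partial>gumbel) \<partial>gumbel)
      = (\<integral>z. h (z + ln (exp a + exp b)) \<partial>gumbel)"
proof -
  let ?k = "ln (exp a + exp b)" and ?m = "\<lambda>(z1, z2). max (z1 + a) (z2 + b)"
  have [measurable]: "h \<in> borel_measurable borel"
    using h by measurable
  have "integrable gumbel (\<lambda>z. h (z + ?k))"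
    by (rule integrable_gumbel_lipschitz[OF lipschitz_on_compose_nonexpansive[OF h]]) simp
  then have "integrable (distr (gumbel \<Otimes>\<^sub>M gumbel) borel ?m) h"
    by (simp add: distr_max_gumbel_pair integrable_distr_eq)
  then have int: "integrable (gumbel \<Otimes>\<^sub>M gumbel) (\<lambda>p. h (?m p))"
    by (subst (asm) integrable_distr_eq) auto
  have "(\<integral>z1. (\<integral>z2. h (max (z1 + a) (z2 + b)) \<partial>gumbel) \<partial>gumbel)
      = integral\<^sup>L (gumbel \<Otimes>\<^sub>M gumbel) (\<lambda>p. h (?m p))"
    using GG.integral_fst'[OF int] by (simp add: case_prod_beta')
  also have "\<dots> = integral\<^sup>L (distr (gumbel \<Otimes>\<^sub>M gumbel) borel ?m) h"
    by (subst integral_distr) auto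
  also have "\<dots> = (\<integral>z. h (z + ?k) \<partial>gumbel)"
    by (simp add: distr_max_gumbel_pair integral_distr)
  finally show ?thesis .
qed

section \<open>The semigroup\<close>

text \<open>For \<open>t < 0\<close> the shift \<open>ln (1 - exp (- t))\<close> is \<open>ln\<close> of a negative number, an unspecified
  constant; the lemmas below without a sign condition on \<open>t\<close> use only that it is a constant.\<close>

lemma P0_eq_integral:
  "t \<noteq> 0 \<Longrightarrow> P0 t f x = (\<integral>z. f (max (x - t) (z + ln (1 - exp (- t)))) \<partial>gumbel)"
  by (simp add: P0_def)

lemma P0_0: "P0 0 f = f"
  by (simp add: P0_def fun_eq_iff)

lemma P0_linear:
  assumes f: "L-lipschitz_on UNIV f" and g: "K-lipschitz_on UNIV g"
  shows "P0 t (\<lambda>x. a * f x + b * g x) = (\<lambda>x. a * P0 t f x + b * P0 t g x)"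
proof (cases "t = 0")
  case False
  then show ?thesis
    using integrable_gumbel_lipschitz_max[OF f] integrable_gumbel_lipschitz_max[OF g]
    by (simp add: P0_eq_integral fun_eq_iff)
qed (simp add: P0_0)

lemma P0_semigroup:
  assumes f: "L-lipschitz_on UNIV f" and "0 \<le> t" "0 \<le> s"
  shows "P0 t (P0 s f) = P0 (t + s) f"
proof (cases "t = 0 \<or> s = 0")
  case False
  with assms have "0 < t" "0 < s"
    by auto
  let ?c = "\<lambda>t. ln (1 - exp (- t))"
  have shifts: "ln (exp (?c t - s) + exp (?c s)) = ?c (t + s)"
  proof -
    have "exp (?c t) = 1 - exp (- t)" "exp (?c s) = 1 - exp (- s)"
      using \<open>0 < t\<close> \<open>0 < s\<close> by simp_all
    then have "exp (?c t - s) + exp (?c s) = (1 - exp (- t)) * exp (- s) + (1 - exp (- s))"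
      by (simp add: exp_diff exp_minus divide_inverse)
    also have "\<dots> = 1 - exp (- (t + s))"
      by (simp add: algebra_simps flip: exp_add)
    finally show ?thesis
      by simp
  qed
  show ?thesis
  proof
    fix x
    let ?h = "\<lambda>w. f (max (x - t - s) w)"
    have h: "L-lipschitz_on UNIV ?h"
      by (rule lipschitz_on_compose_nonexpansive[OF f]) (auto simp: max_def)
    have "P0 t (P0 s f) x
        = (\<integral>z2. (\<integral>z1. ?h (max (z2 + (?c t - s)) (z1 + ?c s)) \<partial>gumbel) \<partial>gumbel)"
      using False by (simp add: P0_eq_integral max_diff_distrib_left max.assoc algebra_simps)
    also have "\<dots> = (\<integral>z. ?h (z + ?c (t + s)) \<partial>gumbel)"
      unfolding integral_max_gumbel_pair[OF h] shifts ..
    also have "\<dots> = P0 (t + s) f x"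
      using \<open>0 < t\<close> \<open>0 < s\<close> by (simp add: P0_eq_integral algebra_simps)
    finally show "P0 t (P0 s f) x = P0 (t + s) f x" .
  qed
qed (auto simp: P0_0)

lemma P0_gumbel_invariant:
  assumes f: "L-lipschitz_on UNIV f" and "0 \<le> t"
  shows "(\<integral>z. P0 t f z \<partial>gumbel) = (\<integral>z. f z \<partial>gumbel)"
proof (cases "t = 0")
  case False
  let ?c = "ln (1 - exp (- t))"
  have "(\<integral>z. P0 t f z \<partial>gumbel) = (\<integral>z. (\<integral>w. f (max (z + (- t)) (w + ?c)) \<partial>gumbel) \<partial>gumbel)"
    using False by (simp add: P0_eq_integral)
  also have "\<dots> = (\<integral>z. f (z + ln (exp (- t) + exp ?c)) \<partial>gumbel)"
    by (rule integral_max_gumbel_pair[OF f])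
  also have "ln (exp (- t) + exp ?c) = 0"
    using False \<open>0 \<le> t\<close> by simp
  finally show ?thesis
    by simp
qed (simp add: P0_0)

lemma abs_max_shift_le:
  fixes x z t :: real
  assumes "1 \<le> t"
  shows "\<bar>max (x - t) (z + ln (1 - exp (- t)))\<bar> \<le> \<bar>x\<bar> + \<bar>z\<bar> - ln (1 - exp (- 1))"
proof -
  have "exp (- t) \<le> exp (- 1)" "exp (- t) < 1"
    using assms by auto
  then have "ln (1 - exp (- 1)) \<le> ln (1 - exp (- t))"
    by (subst ln_le_cancel_iff) auto
  moreover have "ln (1 - exp (- t)) \<le> 0"
    using \<open>exp (- t) < 1\<close> by simp
  ultimately show ?thesis
    using assms by linarith
qed

lemma max_shift_tendsto:
  fixes x z :: real
  shows "((\<lambda>t. max (x - t) (z + ln (1 - exp (- t)))) \<longlongrightarrow> z) at_top"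
proof -
  have "((\<lambda>t. z + ln (1 - exp (- t))) \<longlongrightarrow> z) at_top"
    by real_asymp
  moreover have "\<forall>\<^sub>F t in at_top. x - t < z + ln (1 - exp (- t))"
    by real_asymp
  ultimately show ?thesis
    by (rule Lim_transform_eventually[OF _ eventually_mono]) auto
qed

lemma P0_tendsto_gumbel_integral:
  assumes f: "L-lipschitz_on UNIV f"
  shows "((\<lambda>t. P0 t f x) \<longlongrightarrow> (\<integral>z. f z \<partial>gumbel)) at_top"
proof -
  have [measurable]: "f \<in> borel_measurable borel"
    using f by measurable
  let ?s = "\<lambda>t z. f (max (x - t) (z + ln (1 - exp (- t))))"
  let ?w = "\<lambda>z. \<bar>f 0\<bar> + L * (\<bar>x\<bar> + \<bar>z\<bar> - ln (1 - exp (- 1)))"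
  have "((\<lambda>t. integral\<^sup>L gumbel (?s t)) \<longlongrightarrow> integral\<^sup>L gumbel f) at_top"
  proof (rule integral_dominated_convergence_at_top[where w="?w"])
    show "integrable gumbel ?w"
      by (intro Bochner_Integration.integrable_add integrable_mult_right Bochner_Integration.integrable_diff
          integrable_gumbel_abs) auto
    show "AE z in gumbel. ((\<lambda>t. ?s t z) \<longlongrightarrow> f z) at_top"
      using lipschitz_on_continuous_on[OF f]
      by (intro AE_I2 isCont_tendsto_compose[OF _ max_shift_tendsto])
        (simp add: continuous_on_eq_continuous_at)
    show "\<forall>\<^sub>F t in at_top. AE z in gumbel. norm (?s t z) \<le> ?w z"
    proof (rule eventually_mono[OF eventually_ge_at_top[of 1]], intro AE_I2)
      fix t z :: real
      assume "1 \<le> t"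
      then have "L * \<bar>max (x - t) (z + ln (1 - exp (- t)))\<bar> \<le> L * (\<bar>x\<bar> + \<bar>z\<bar> - ln (1 - exp (- 1)))"
        by (intro mult_left_mono abs_max_shift_le lipschitz_on_nonneg[OF f])
      then show "norm (?s t z) \<le> ?w z"
        unfolding real_norm_def
        using lipschitz_on_UNIV_abs_le[OF f, of "max (x - t) (z + ln (1 - exp (- t)))"] by linarith
    qed
  qed auto
  moreover have "\<forall>\<^sub>F t in at_top. integral\<^sup>L gumbel (?s t) = P0 t f x"
    by (rule eventually_mono[OF eventually_gt_at_top[of 0]]) (simp add: P0_eq_integral)
  ultimately show ?thesis
    by (rule Lim_transform_eventually)
qed

section \<open>Regularity of \<open>P0 t f\<close>\<close>

lemma has_real_derivative_integral_max_gumbel: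
  assumes f: "L-lipschitz_on UNIV f" and D: "(f has_real_derivative D) (at y)"
  shows "((\<lambda>x. \<integral>z. f (max x (z + c)) \<partial>gumbel) has_real_derivative D * gumbel_cdf (y - c)) (at y)"
proof -
  have [measurable]: "f \<in> borel_measurable borel"
    using f by measurable
  let ?q = "\<lambda>h z. (f (max (y + h) (z + c)) - f (max y (z + c))) / h"
  have lim: "((\<lambda>h. \<integral>z. ?q h z \<partial>gumbel) \<longlongrightarrow> (\<integral>z. D * indicator {..<y - c} z \<partial>gumbel)) (at 0)"
  proof (rule integral_dominated_convergence_at[where w="\<lambda>_. L"])
    have "AE z in gumbel. z \<noteq> y - c"
      using emeasure_gumbel_singleton by (intro AE_I'[of "{y - c}"]) auto
    then show "AE z in gumbel. ((\<lambda>h. ?q h z) \<longlongrightarrow> D * indicator {..<y - c} z) (at 0)"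
    proof (rule eventually_mono)
      fix z
      assume "z \<noteq> y - c"
      then have pointwise: "((\<lambda>h. ?q h z) \<longlongrightarrow> (if z + c < y then D else 0)) (at 0)"
        by (intro difference_quotient_max_tendsto[OF D]) auto
      have "D * indicator {..<y - c} z = (if z + c < y then D else 0)"
        by (simp add: indicator_def less_diff_eq)
      with pointwise show "((\<lambda>h. ?q h z) \<longlongrightarrow> D * indicator {..<y - c} z) (at 0)"
        by (simp only:)
    qed
    show "AE z in gumbel. norm (?q h z) \<le> L" for h
      using abs_difference_quotient_max_le[OF f] by simp
  qed auto
  have quotient: "(\<lambda>h. \<integral>z. ?q h z \<partial>gumbel)
      = (\<lambda>h. ((\<integral>z. f (max (y + h) (z + c)) \<partial>gumbel) - (\<integral>z. f (max y (z + c)) \<partial>gumbel)) / h)"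
    using integrable_gumbel_lipschitz_max[OF f] by (simp add: fun_eq_iff)
  have limit: "(\<integral>z. D * indicator {..<y - c} z \<partial>gumbel) = D * gumbel_cdf (y - c)"
    using measure_gumbel_lessThan by simp
  from lim show ?thesis
    unfolding quotient limit DERIV_def by simp
qed

lemma P0_has_real_derivative:
  assumes f: "L-lipschitz_on UNIV f" and "t \<noteq> 0" and D: "(f has_real_derivative D) (at (x - t))"
  shows "(P0 t f has_real_derivative D * gumbel_cdf (x - t - ln (1 - exp (- t)))) (at x)"
proof -
  define F where "F y = (\<integral>z. f (max y (z + ln (1 - exp (- t)))) \<partial>gumbel)" for y
  have "(F has_real_derivative D * gumbel_cdf (x - t - ln (1 - exp (- t)))) (at (x + - t))"
    unfolding F_def using has_real_derivative_integral_max_gumbel[OF f D] by simp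
  then have "((\<lambda>x. F (x + - t)) has_real_derivative D * gumbel_cdf (x - t - ln (1 - exp (- t)))) (at x)"
    by (rule DERIV_shift[THEN iffD1])
  moreover have "P0 t f = (\<lambda>x. F (x + - t))"
    using \<open>t \<noteq> 0\<close> by (simp add: P0_eq_integral F_def fun_eq_iff)
  ultimately show ?thesis
    by simp
qed

lemma P0_lipschitz:
  assumes f: "L-lipschitz_on UNIV f"
  shows "L-lipschitz_on UNIV (P0 t f)"
proof (cases "t = 0")
  case False
  let ?u = "\<lambda>x z. f (max (x - t) (z + ln (1 - exp (- t))))"
  show ?thesis
  proof (rule lipschitz_onI)
    fix x y :: real
    have "dist (P0 t f x) (P0 t f y) = norm (\<integral>z. ?u x z - ?u y z \<partial>gumbel)"
      using False integrable_gumbel_lipschitz_max[OF f] by (simp add: P0_eq_integral dist_real_def)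
    also have "\<dots> \<le> (\<integral>z. L * dist x y \<partial>gumbel)"
    proof (rule Bochner_Integration.integral_norm_bound_integral)
      show "norm (?u x z - ?u y z) \<le> L * dist x y" for z
      proof -
        have "norm (?u x z - ?u y z) \<le> L * dist (max (x - t) (z + ln (1 - exp (- t)))) (max (y - t) (z + ln (1 - exp (- t))))"
          using lipschitz_onD[OF f] by (simp add: dist_norm)
        also have "\<dots> \<le> L * dist x y"
          using lipschitz_on_nonneg[OF f] by (intro mult_left_mono) (auto simp: dist_real_def max_def)
        finally show ?thesis .
      qed
    qed (use integrable_gumbel_lipschitz_max[OF f] in auto)
    finally show "dist (P0 t f x) (P0 t f y) \<le> L * dist x y"
      using G.prob_space by simp
  qed (rule lipschitz_on_nonneg[OF f])
qed (simp add: P0_0 f)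

lemma P0_Lip2:
  assumes "f \<in> Lip2"
  shows "P0 t f \<in> Lip2"
proof (cases "t = 0")
  case False
  from assms obtain L g K where f: "L-lipschitz_on UNIV f" and g: "K-lipschitz_on UNIV g"
    and ae: "AE x in lborel. (f has_real_derivative g x) (at x)"
    unfolding Lip2_def by blast
  let ?c = "ln (1 - exp (- t))"
  have g_bound: "\<bar>g x\<bar> \<le> L" for x
    using lipschitz_on_AE_derivative_abs_le[OF f lipschitz_on_continuous_on[OF g] ae] .
  have "(L * 1 + 1 * K)-lipschitz_on UNIV (\<lambda>x. g (x - t) * gumbel_cdf (x - t - ?c))"
  proof (rule lipschitz_on_mult_bounded)
    show "K-lipschitz_on UNIV (\<lambda>x. g (x - t))"
      by (rule lipschitz_on_compose_nonexpansive[OF g]) simp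
    show "1-lipschitz_on UNIV (\<lambda>x. gumbel_cdf (x - t - ?c))"
      by (rule lipschitz_on_compose_nonexpansive[OF lipschitz_gumbel_cdf]) simp
  qed (use g_bound lipschitz_on_nonneg[OF f] in auto)
  moreover have "AE x in lborel. (P0 t f has_real_derivative g (x - t) * gumbel_cdf (x - t - ?c)) (at x)"
    using AE_lborel_translate[OF ae, of t] by (rule eventually_mono) (rule P0_has_real_derivative[OF f False])
  ultimately show ?thesis
    using P0_lipschitz[OF f] unfolding Lip2_def by blast
qed (simp add: P0_0 assms)

theorem proposition2p2:
  shows "(\<forall>t\<ge>0. \<forall>f\<in>Lip2. P0 t f \<in> Lip2)
    \<and> (\<forall>t\<ge>0. \<forall>f\<in>Lip2. \<forall>g\<in>Lip2. \<forall>a b::real.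
          P0 t (\<lambda>x. a * f x + b * g x) = (\<lambda>x. a * P0 t f x + b * P0 t g x))
    \<and> (\<forall>f\<in>Lip2. P0 0 f = f)
    \<and> (\<forall>t\<ge>0. \<forall>s\<ge>0. \<forall>f\<in>Lip2. P0 t (P0 s f) = P0 (t + s) f)
    \<and> (\<forall>f\<in>Lip2. \<forall>x. ((\<lambda>t. P0 t f x) \<longlongrightarrow> (\<integral>z. f z \<partial>gumbel)) at_top)
    \<and> (\<forall>t\<ge>0. \<forall>f\<in>Lip2. (\<integral>z. P0 t f z \<partial>gumbel) = (\<integral>z. f z \<partial>gumbel))"
proof -
  have lipschitz: "\<exists>L. L-lipschitz_on UNIV f" if "f \<in> Lip2" for f
    using that by (auto simp: Lip2_def)
  show ?thesis
    by (intro conjI allI ballI impI P0_Lip2)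
      (auto dest!: lipschitz intro: P0_linear P0_0 P0_semigroup
        P0_tendsto_gumbel_integral P0_gumbel_invariant)
qed

end
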